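(* Assume (H1)–(H4) and let $H$ be a defining function for $Y$. Let $u:X\to\mathbb{R}$ be an upper semicontinuous viscosity subsolution of $( * )$. Then $\partial u(X)\subset\bar Y$.
   Context: Standing hypotheses (H1)–(H4): (H1) $X,Y\subset\mathbb{R}^n$ are convex, bounded, open domains. (H2) $f\in L^1(X)$ is non-negative and lower semicontinuous. (H3) $g\in L^1(\mathbb{R}^n)$ is positive on $Y$, vanishes on $\mathbb{R}^n\setminus Y$, and is upper semicontinuous. (H4) $\int_X f\,dx=\int_Y g\,dy$. A defining function for $Y$ is a continuous $H:\mathbb{R}^n\to\mathbb{R}$ with $H<0$ on $Y$, $H=0$ on $\partial Y$, $H>0$ on $\mathbb{R}^n\setminus\bar Y$. $\lambda_1(A)$ is the smallest eigenvalue of a symmetric matrix $A$. Equation $( * )$: $\max\{-g(\nabla u)\det(D^2u)+f,-\lambda_1(D^2u),H(\nabla u)\}=0$ in $X$. With $F(x,p,A)=\max\{-g(p)\det A+f(x),-\lambda_1(A),H(p)\}$, an upper semicontinuous $u$ is a viscosity subsolution of $( * )$ if for every $\phi\in C^2$ and $x\in X$ at which $u-\phi$ has a local maximum, $F_*(x,\nabla\phi(x),D^2\phi(x))\le0$, $F_*$ the lower semicontinuous envelope of $F$. Such subsolutions are convex, so $\partial u(x)$ denotes the subdifferential of $u$ at $x$ and $\partial u(E)=\bigcup_{x\in E}\partial u(x)$. *)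

theory Defs
  imports "HOL-Analysis.Analysis"
begin

definition lsc_on :: "('a::metric_space) set \<Rightarrow> ('a \<Rightarrow> real) \<Rightarrow> bool" where
  "lsc_on S h \<longleftrightarrow> (\<forall>x\<in>S. \<forall>t. t < h x \<longrightarrow> (\<exists>e>0. \<forall>y\<in>S. dist y x < e \<longrightarrow> t < h y))"

definition usc_on :: "('a::metric_space) set \<Rightarrow> ('a \<Rightarrow> real) \<Rightarrow> bool" where
  "usc_on S h \<longleftrightarrow> (\<forall>x\<in>S. \<forall>t. h x < t \<longrightarrow> (\<exists>e>0. \<forall>y\<in>S. dist y x < e \<longrightarrow> h y < t))"

definition defining_function :: "(real^'n) set \<Rightarrow> (real^'n \<Rightarrow> real) \<Rightarrow> bool" where
  "defining_function Y H \<longleftrightarrow> continuous_on UNIV H \<and>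
     (\<forall>y\<in>Y. H y < 0) \<and> (\<forall>y\<in>frontier Y. H y = 0) \<and> (\<forall>y\<in>- closure Y. H y > 0)"

definition symmetric_mat :: "real^'n^'n \<Rightarrow> bool" where
  "symmetric_mat A \<longleftrightarrow> transpose A = A"

definition lambda1 :: "real^'n^'n \<Rightarrow> real" where
  "lambda1 A = Min {c. \<exists>v. v \<noteq> 0 \<and> A *v v = c *\<^sub>R v}"

definition opF :: "(real^'n \<Rightarrow> real) \<Rightarrow> (real^'n \<Rightarrow> real) \<Rightarrow> (real^'n \<Rightarrow> real)
     \<Rightarrow> real^'n \<Rightarrow> real^'n \<Rightarrow> real^'n^'n \<Rightarrow> real" where
  "opF f g H x p A = max (- g p * det A + f x) (max (- lambda1 A) (H p))"

text \<open>Lower semicontinuous envelope of F on X \<times> R^n \<times> Sym(n).\<close>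
definition opF_lower :: "(real^'n) set \<Rightarrow> (real^'n \<Rightarrow> real) \<Rightarrow> (real^'n \<Rightarrow> real) \<Rightarrow> (real^'n \<Rightarrow> real)
     \<Rightarrow> real^'n \<Rightarrow> real^'n \<Rightarrow> real^'n^'n \<Rightarrow> real" where
  "opF_lower X f g H x p A =
     (SUP r\<in>{r::real. r > 0}. Inf {opF f g H y q B | y q B.
        y \<in> X \<and> symmetric_mat B \<and> dist y x < r \<and> dist q p < r \<and> dist B A < r})"

definition C2_with :: "(real^'n \<Rightarrow> real) \<Rightarrow> (real^'n \<Rightarrow> real^'n) \<Rightarrow> (real^'n \<Rightarrow> real^'n^'n) \<Rightarrow> bool" where
  "C2_with phi Dphi D2phi \<longleftrightarrow>
     (\<forall>x. (phi has_derivative (\<lambda>h. Dphi x \<bullet> h)) (at x)) \<and>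
     (\<forall>x. (Dphi has_derivative (\<lambda>h. D2phi x *v h)) (at x)) \<and>
     continuous_on UNIV D2phi"

definition viscosity_subsolution :: "(real^'n) set \<Rightarrow> (real^'n \<Rightarrow> real) \<Rightarrow> (real^'n \<Rightarrow> real)
     \<Rightarrow> (real^'n \<Rightarrow> real) \<Rightarrow> (real^'n \<Rightarrow> real) \<Rightarrow> bool" where
  "viscosity_subsolution X f g H u \<longleftrightarrow> usc_on X u \<and>
     (\<forall>phi Dphi D2phi x. C2_with phi Dphi D2phi \<and> x \<in> X \<and>
        (\<exists>e>0. \<forall>y\<in>X. dist y x < e \<longrightarrow> u y - phi y \<le> u x - phi x)
        \<longrightarrow> opF_lower X f g H x (Dphi x) (D2phi x) \<le> 0)"

definition subdiff :: "(real^'n) set \<Rightarrow> (real^'n \<Rightarrow> real) \<Rightarrow> real^'n \<Rightarrow> (real^'n) set" where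
  "subdiff X u x = {p. \<forall>y\<in>X. u y \<ge> u x + p \<bullet> (y - x)}"

definition subdiff_set :: "(real^'n) set \<Rightarrow> (real^'n \<Rightarrow> real) \<Rightarrow> (real^'n) set \<Rightarrow> (real^'n) set" where
  "subdiff_set X u E = (\<Union>x\<in>E. subdiff X u x)"

end

theory Submission
  imports Defs
begin

text \<open>
  If a subgradient p of u at x0 lay outside the closed convex set \<open>closure Y\<close>, a hyperplane
  would separate them: \<open>a \<bullet> p < b < a \<bullet> q\<close> for q in \<open>closure Y\<close>. Tilting the supporting
  plane of u at x0 slightly in the direction of a and adding a large quadratic penalty yields a
  smooth function touching u from above at some point of the half-ball behind x0, and its
  gradient there still has a-component below b. Since H is continuous, the H-component of the
  subsolution inequality survives the lower semicontinuous envelope and puts that gradient into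
  \<open>closure Y\<close>, a contradiction.
\<close>

lemma usc_on_attains_max:
  fixes h :: "'a::metric_space \<Rightarrow> real"
  assumes "compact S" "S \<noteq> {}" "usc_on S h"
  shows "\<exists>x\<in>S. \<forall>y\<in>S. h y \<le> h x"
proof (rule ccontr)
  assume "\<not> ?thesis"
  then have no_max: "\<forall>x\<in>S. \<exists>y\<in>S. h x < h y" by (auto simp: not_le)
  define below where
    "below y = \<Union>{ball z e | z e. z \<in> S \<and> e > 0 \<and> (\<forall>v\<in>S. dist v z < e \<longrightarrow> h v < h y)}" for y
  have "open (below y)" for y unfolding below_def by (rule open_Union) blast
  moreover have "S \<subseteq> (\<Union>y\<in>S. below y)"
  proof
    fix z assume z: "z \<in> S"
    then obtain y where y: "y \<in> S" "h z < h y" using no_max by blast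
    then obtain e where "e > 0" "\<forall>v\<in>S. dist v z < e \<longrightarrow> h v < h y"
      using assms(3) z unfolding usc_on_def by blast
    then have "z \<in> below y" unfolding below_def using z by (blast intro: centre_in_ball[THEN iffD2])
    then show "z \<in> (\<Union>y\<in>S. below y)" using y by blast
  qed
  ultimately obtain F where F: "F \<subseteq> S" "finite F" "S \<subseteq> (\<Union>y\<in>F. below y)"
    using compactE_image[OF assms(1)] by metis
  then have "F \<noteq> {}" using assms(2) by auto
  then have "Max (h ` F) \<in> h ` F" using F(2) by (intro Max_in) auto
  then obtain ym where "ym \<in> F" "h ym = Max (h ` F)" by (metis imageE)
  then have ym: "ym \<in> F" "\<forall>y\<in>F. h y \<le> h ym" using F(2) by auto
  then obtain y where y: "y \<in> F" "ym \<in> below y" using F by blast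
  then obtain z e where "z \<in> S" "\<forall>v\<in>S. dist v z < e \<longrightarrow> h v < h y" "ym \<in> ball z e"
    unfolding below_def by blast
  then have "h ym < h y" using ym(1) F(1) by (auto simp: dist_commute)
  then show False using ym(2) y(1) by fastforce
qed

lemma usc_on_subset: "usc_on X u \<Longrightarrow> S \<subseteq> X \<Longrightarrow> usc_on S u"
  unfolding usc_on_def by (meson subsetD)

lemma usc_on_diff_continuous_on:
  fixes u phi :: "'a::metric_space \<Rightarrow> real"
  assumes "usc_on S u" "continuous_on S phi"
  shows "usc_on S (\<lambda>y. u y - phi y)"
  unfolding usc_on_def
proof (intro ballI allI impI)
  fix x t assume x: "x \<in> S" and lt: "u x - phi x < t"
  define eta where "eta = t - (u x - phi x)"
  have eta: "eta > 0" using lt eta_def by simp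
  obtain e1 where e1: "e1 > 0" "\<forall>y\<in>S. dist y x < e1 \<longrightarrow> u y < u x + eta/2"
    using assms(1) x eta unfolding usc_on_def by (metis less_add_same_cancel1 half_gt_zero)
  obtain e2 where e2: "e2 > 0" "\<forall>y\<in>S. dist y x < e2 \<longrightarrow> dist (phi y) (phi x) < eta/2"
    using assms(2) x eta unfolding continuous_on_iff by (metis half_gt_zero)
  show "\<exists>e>0. \<forall>y\<in>S. dist y x < e \<longrightarrow> u y - phi y < t"
  proof (intro exI[of _ "min e1 e2"] conjI ballI impI)
    fix y assume y: "y \<in> S" "dist y x < min e1 e2"
    then have "u y < u x + eta/2" "\<bar>phi y - phi x\<bar> < eta/2"
      using e1 e2 by (auto simp: dist_real_def)
    then show "u y - phi y < t"
      unfolding eta_def by argo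
  qed (use e1 e2 in simp)
qed

lemma C2_with_quadratic:
  fixes q e z :: "real^'n" and c \<alpha> \<beta> :: real
  defines "A \<equiv> (\<chi> i j. 2 * \<alpha> * (e $ i * e $ j) + (if i = j then 2 * \<beta> else 0)) :: real^'n^'n"
  shows "C2_with (\<lambda>y. c + q \<bullet> (y - z) + \<alpha> * (e \<bullet> (y - z))\<^sup>2 + \<beta> * ((y - z) \<bullet> (y - z)))
           (\<lambda>y. q + (2 * \<alpha> * (e \<bullet> (y - z))) *\<^sub>R e + (2 * \<beta>) *\<^sub>R (y - z)) (\<lambda>_. A)"
      (is "C2_with ?\<phi> ?D\<phi> _")
    and "symmetric_mat A"
proof -
  have A: "A *v h = (2 * \<alpha> * (e \<bullet> h)) *\<^sub>R e + (2 * \<beta>) *\<^sub>R h" for h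
  proof -
    have "(A *v h) $ i = 2 * \<alpha> * e $ i * (e \<bullet> h) + 2 * \<beta> * h $ i" for i
    proof -
      have "(A *v h) $ i = (\<Sum>j\<in>UNIV. 2 * \<alpha> * e $ i * (e $ j * h $ j))
          + (\<Sum>j\<in>UNIV. if i = j then 2 * \<beta> * h $ j else 0)"
        unfolding A_def matrix_vector_mult_def
        by (simp only: vec_lambda_beta distrib_right sum.distrib mult.assoc
            if_distrib[of "\<lambda>z. z * h $ _"] mult_zero_left)
      then show ?thesis by (simp add: inner_vec_def sum_distrib_left)
    qed
    then show ?thesis by (simp add: vec_eq_iff)
  qed
  show "C2_with ?\<phi> ?D\<phi> (\<lambda>_. A)"
    unfolding C2_with_def A
    by (auto intro!: derivative_eq_intros ext simp: inner_add_left inner_commute algebra_simps power2_eq_square)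
  show "symmetric_mat A" unfolding symmetric_mat_def A_def
    by (simp add: vec_eq_iff transpose_def mult.commute)
qed

lemma defining_function_bdd_below:
  assumes "defining_function Y H" "bounded Y"
  shows "bdd_below (range H)"
proof -
  have "continuous_on UNIV H" using assms(1) unfolding defining_function_def by blast
  then have "bounded (H ` closure Y)"
    using assms(2) by (meson compact_closure compact_continuous_image compact_imp_bounded
        continuous_on_subset top_greatest)
  then obtain m where m: "\<And>q. q \<in> closure Y \<Longrightarrow> m \<le> H q"
    by (meson bdd_below.E bounded_imp_bdd_below imageI)
  have pos: "0 < H q" if "q \<notin> closure Y" for q
    using assms(1) that unfolding defining_function_def by simp
  have "min m 0 \<le> H q" for q
    using m[of q] pos[of q] by (cases "q \<in> closure Y") (auto simp: min_le_iff_disj)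
  then show ?thesis by (intro bdd_belowI) auto
qed

lemma opF_lower_nonpos_imp_defining_function_nonpos:
  assumes H: "defining_function Y H" "bounded Y"
    and "x \<in> X" "symmetric_mat A" "opF_lower X f g H x p A \<le> 0"
  shows "H p \<le> 0"
proof -
  obtain m where m: "\<And>q. m \<le> H q"
    using defining_function_bdd_below[OF H] by (auto simp: bdd_below_def)
  have cont: "continuous_on UNIV H" using H(1) unfolding defining_function_def by blast
  define S where "S r = {opF f g H y q B |y q B.
        y \<in> X \<and> symmetric_mat B \<and> dist y x < r \<and> dist q p < r \<and> dist B A < r}" for r
  have H_le_opF: "H q \<le> opF f g H y q B" for y q B unfolding opF_def by simp
  have opF_in: "opF f g H x p A \<in> S r" if "r > 0" for r
    unfolding S_def using that assms(3,4) by force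
  have bdd: "bdd_below (S r)" for r
    unfolding S_def using H_le_opF m by (fastforce intro: bdd_belowI[of _ m] order_trans)
  have bdd_Inf: "bdd_above ((\<lambda>r. Inf (S r)) ` {r. r > 0})"
    using cInf_lower[OF opF_in bdd] by (auto simp: bdd_above_def)
  have lower: "opF_lower X f g H x p A = (SUP r\<in>{r. r > 0}. Inf (S r))"
    unfolding opF_lower_def S_def by simp
  show ?thesis
  proof (rule field_le_epsilon)
    fix \<epsilon> :: real assume "\<epsilon> > 0"
    then obtain d where d: "d > 0" "\<And>q. dist q p < d \<Longrightarrow> dist (H q) (H p) < \<epsilon>"
      using cont unfolding continuous_on_iff by blast
    have "H p - \<epsilon> \<le> Inf (S d)"
    proof (rule cInf_greatest)
      show "S d \<noteq> {}" using opF_in d(1) by blast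
      fix t assume "t \<in> S d"
      then obtain y q B where "t = opF f g H y q B" "dist q p < d" unfolding S_def by blast
      then show "H p - \<epsilon> \<le> t" using d(2) H_le_opF[of q y B] by (force simp: dist_real_def)
    qed
    also have "\<dots> \<le> opF_lower X f g H x p A"
      unfolding lower by (rule cSup_upper) (use d bdd_Inf in auto)
    finally show "H p \<le> 0 + \<epsilon>" using assms(5) by simp
  qed
qed

lemma halfball_local_max:
  fixes h :: "'a::euclidean_space \<Rightarrow> real" and x0 e :: 'a and r :: real
  defines "R \<equiv> cball x0 r \<inter> {y. e \<bullet> (y - x0) \<le> 0}"
  assumes "cball x0 r \<subseteq> X" "norm e = 1" "usc_on R h" "y0 \<in> R"
    and boundary: "\<And>y. y \<in> R \<Longrightarrow> dist x0 y = r \<or> e \<bullet> (y - x0) = 0 \<Longrightarrow> h y < h y0"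
  shows "\<exists>y1\<in>X. e \<bullet> (y1 - x0) < 0 \<and> (\<exists>\<epsilon>>0. \<forall>y\<in>X. dist y y1 < \<epsilon> \<longrightarrow> h y \<le> h y1)"
proof -
  have "compact R" unfolding R_def
    by (intro compact_Int_closed compact_cball closed_Collect_le continuous_intros)
  moreover have "R \<noteq> {}" using assms(5) by blast
  ultimately obtain y1 where y1: "y1 \<in> R" "\<And>y. y \<in> R \<Longrightarrow> h y \<le> h y1"
    using usc_on_attains_max[OF _ _ assms(4)] by blast
  have "\<not> (dist x0 y1 = r \<or> e \<bullet> (y1 - x0) = 0)"
  proof
    assume "dist x0 y1 = r \<or> e \<bullet> (y1 - x0) = 0"
    then have "h y1 < h y0" by (rule boundary[OF y1(1)])
    with y1(2)[OF assms(5)] show False by linarith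
  qed
  then have inside: "dist x0 y1 < r" "e \<bullet> (y1 - x0) < 0"
    using y1(1) unfolding R_def by auto
  define \<epsilon> where "\<epsilon> = min (r - dist x0 y1) (- (e \<bullet> (y1 - x0)))"
  have ball_R: "ball y1 \<epsilon> \<subseteq> R"
  proof
    fix y assume "y \<in> ball y1 \<epsilon>"
    then have "dist y1 y < r - dist x0 y1" "dist y1 y < - (e \<bullet> (y1 - x0))" by (auto simp: \<epsilon>_def)
    moreover have "dist x0 y \<le> dist x0 y1 + dist y1 y" by (rule dist_triangle)
    moreover have "e \<bullet> (y - y1) \<le> dist y1 y"
      using norm_cauchy_schwarz[of e "y - y1"] assms(3) by (simp add: dist_norm norm_minus_commute)
    moreover have "e \<bullet> (y - x0) = e \<bullet> (y - y1) + e \<bullet> (y1 - x0)" by (simp add: inner_diff_right)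
    ultimately show "y \<in> R" unfolding R_def by auto
  qed
  have "R \<subseteq> X" using assms(2) unfolding R_def by blast
  show ?thesis
  proof (intro bexI[of _ y1] conjI exI[of _ \<epsilon>] ballI impI)
    fix y assume "y \<in> X" "dist y y1 < \<epsilon>"
    then show "h y \<le> h y1" using ball_R y1(2) by (auto simp: dist_commute)
  qed (use inside y1(1) \<open>R \<subseteq> X\<close> in \<open>auto simp: \<epsilon>_def\<close>)
qed

lemma penalty_parameters:
  fixes M r \<gamma> :: real
  assumes "0 \<le> M" "0 < r" "0 < \<gamma>"
  obtains C t where "0 < C" "C * r\<^sup>2 = M + \<gamma> * r + 1" "0 < t" "t \<le> r" "C * t\<^sup>2 \<le> \<gamma> * t / 2"
proof
  define C where "C = (M + \<gamma> * r + 1) / r\<^sup>2"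
  show C: "0 < C" "C * r\<^sup>2 = M + \<gamma> * r + 1"
    using assms by (auto simp: C_def intro!: divide_pos_pos add_nonneg_pos)
  define t where "t = min r (\<gamma> / (2 * C))"
  show "0 < t" "t \<le> r" using assms C(1) by (auto simp: t_def)
  have "C * t \<le> C * (\<gamma> / (2 * C))" using C(1) by (intro mult_left_mono) (auto simp: t_def)
  then have "C * t \<le> \<gamma> / 2" using C(1) by simp
  then show "C * t\<^sup>2 \<le> \<gamma> * t / 2" using \<open>0 < t\<close> by (simp add: power2_eq_square mult_right_mono)
qed

lemma curved_boundary_penalty:
  fixes s r \<gamma> C K M :: real
  assumes "\<bar>s\<bar> \<le> r" "0 \<le> \<gamma>" "C \<le> K" "C * r\<^sup>2 = M + \<gamma> * r + 1"
  shows "M + 1 \<le> \<gamma> * s + (C - K) * s\<^sup>2 + K * r\<^sup>2"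
proof -
  have "s\<^sup>2 \<le> r\<^sup>2" using assms(1) by (metis abs_ge_zero power2_abs power_mono)
  then have "0 \<le> (K - C) * (r\<^sup>2 - s\<^sup>2)" using assms(3) by simp
  moreover have "\<gamma> * (- r) \<le> \<gamma> * s" using assms(1,2) by (intro mult_left_mono) auto
  ultimately show ?thesis using assms(4) by (simp add: algebra_simps)
qed

lemma flat_boundary_penalty:
  fixes w d \<rho> K M V :: real
  assumes "d < \<rho> \<Longrightarrow> w < V" "w \<le> M" "0 \<le> d" "0 < \<rho>" "0 \<le> K" "M + 1 \<le> K * \<rho>\<^sup>2" "0 < V"
  shows "w - K * d\<^sup>2 < V"
proof (cases "d < \<rho>")
  case True
  have "0 \<le> K * d\<^sup>2" using assms(5) by simp
  then show ?thesis using assms(1)[OF True] by linarith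
next
  case False
  then have "K * \<rho>\<^sup>2 \<le> K * d\<^sup>2" using assms(4,5) by (intro mult_left_mono power_mono) auto
  then show ?thesis using assms(2,6,7) by linarith
qed

definition tilted_quadratic :: "'a::real_inner \<Rightarrow> 'a \<Rightarrow> real \<Rightarrow> real \<Rightarrow> real \<Rightarrow> 'a \<Rightarrow> real" where
  "tilted_quadratic x0 e \<gamma> \<alpha> \<beta> y =
     \<gamma> * (e \<bullet> (y - x0)) + \<alpha> * (e \<bullet> (y - x0))\<^sup>2 + \<beta> * ((y - x0) \<bullet> (y - x0))"

lemma halfball_penalty_separates:
  fixes w :: "'a::euclidean_space \<Rightarrow> real" and x0 e :: 'a and r :: real
  defines "R \<equiv> cball x0 r \<inter> {y. e \<bullet> (y - x0) \<le> 0}"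
  assumes r: "0 < r" "cball x0 r \<subseteq> X"
    and w: "usc_on X w" "\<And>y. y \<in> X \<Longrightarrow> 0 \<le> w y" "w x0 = 0"
    and M: "\<And>y. y \<in> cball x0 r \<Longrightarrow> w y \<le> M"
    and e: "norm e = 1" and \<gamma>: "\<gamma> > 0"
  obtains \<alpha> \<beta> y0 where "0 < \<alpha> + \<beta>" "y0 \<in> R"
    "\<And>y. y \<in> R \<Longrightarrow> dist x0 y = r \<or> e \<bullet> (y - x0) = 0 \<Longrightarrow>
       w y - tilted_quadratic x0 e \<gamma> \<alpha> \<beta> y < w y0 - tilted_quadratic x0 e \<gamma> \<alpha> \<beta> y0"
proof -
  have "R \<subseteq> X" using r(2) by (auto simp: R_def)
  have "0 \<le> M" using M[of x0] w(2,3) r(1) by simp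
  \<comment> \<open>C beats M on the curved part of the boundary of the half-ball, K on the flat part
      outside the ball of radius \<open>\<rho>\<close>; inside it the flat part is controlled by upper
      semicontinuity of w at x0.\<close>
  obtain C t where C: "0 < C" "C * r\<^sup>2 = M + \<gamma> * r + 1"
    and t: "0 < t" "t \<le> r" "C * t\<^sup>2 \<le> \<gamma> * t / 2"
    using penalty_parameters[OF \<open>0 \<le> M\<close> r(1) \<gamma>] by blast
  define V where "V = \<gamma> * t / 2"
  have V: "V > 0" using t(1) \<gamma> by (simp add: V_def)
  have "x0 \<in> X" using r by auto
  then have "\<forall>t. w x0 < t \<longrightarrow> (\<exists>\<rho>>0. \<forall>y\<in>X. dist y x0 < \<rho> \<longrightarrow> w y < t)"
    using w(1) unfolding usc_on_def by blast
  then obtain \<rho> where \<rho>: "\<rho> > 0" "\<And>y. y \<in> X \<Longrightarrow> dist y x0 < \<rho> \<Longrightarrow> w y < V"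
    using V unfolding w(3) by blast
  define K where "K = max C ((M + 1) / \<rho>\<^sup>2)"
  have K: "C \<le> K" "(M + 1) / \<rho>\<^sup>2 \<le> K" by (simp_all add: K_def)
  then have "M + 1 \<le> K * \<rho>\<^sup>2" using \<rho>(1) by (simp add: pos_divide_le_eq)
  let ?Q = "tilted_quadratic x0 e \<gamma> (C - K) K"
  have proj: "\<bar>e \<bullet> (y - x0)\<bar> \<le> dist x0 y" for y
    using Cauchy_Schwarz_ineq2[of e "y - x0"] e by (simp add: dist_norm norm_minus_commute)
  have sq: "(y - x0) \<bullet> (y - x0) = (dist x0 y)\<^sup>2" for y
    by (metis dist_commute dist_norm power2_norm_eq_inner)
  define y0 where "y0 = x0 - t *\<^sub>R e"
  have y0: "y0 \<in> R" "V \<le> w y0 - ?Q y0"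
  proof -
    have s: "e \<bullet> (y0 - x0) = - t" "(y0 - x0) \<bullet> (y0 - x0) = t\<^sup>2"
      using e by (auto simp: y0_def power2_eq_square inner_commute dest: norm_eq_1[THEN iffD1])
    then show "y0 \<in> R" using t r(1) e by (auto simp: R_def y0_def dist_norm)
    then have "0 \<le> w y0" using w(2) \<open>R \<subseteq> X\<close> by blast
    moreover have "?Q y0 = C * t\<^sup>2 - \<gamma> * t"
      unfolding tilted_quadratic_def s by (simp add: algebra_simps)
    ultimately show "V \<le> w y0 - ?Q y0" using t(3) unfolding V_def by linarith
  qed
  show thesis
  proof (rule that[of "C - K" K y0])
    fix y assume y: "y \<in> R" "dist x0 y = r \<or> e \<bullet> (y - x0) = 0"
    then have "y \<in> X" "w y \<le> M" using M \<open>R \<subseteq> X\<close> by (auto simp: R_def)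
    from y(2) have "w y - ?Q y < V"
    proof
      assume "dist x0 y = r"
      then have "M + 1 \<le> ?Q y"
        using curved_boundary_penalty[OF proj[of y, unfolded \<open>dist x0 y = r\<close>] _ K(1) C(2)] \<gamma>
        by (simp add: tilted_quadratic_def sq \<open>dist x0 y = r\<close>)
      then show ?thesis using \<open>w y \<le> M\<close> V by linarith
    next
      assume "e \<bullet> (y - x0) = 0"
      then show ?thesis
        using flat_boundary_penalty[OF \<rho>(2)[OF \<open>y \<in> X\<close>] \<open>w y \<le> M\<close> _ \<rho>(1) _
            \<open>M + 1 \<le> K * \<rho>\<^sup>2\<close> V] K(1) C(1)
        by (simp add: tilted_quadratic_def sq dist_commute)
    qed
    then show "w y - ?Q y < w y0 - ?Q y0" using y0(2) by linarith
  qed (use C(1) y0(1) in auto)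
qed

lemma nonneg_usc_touched_from_above:
  fixes w :: "'a::euclidean_space \<Rightarrow> real"
  assumes X: "open X" "x0 \<in> X" and w: "usc_on X w" "\<And>y. y \<in> X \<Longrightarrow> 0 \<le> w y" "w x0 = 0"
    and e: "norm e = 1" and \<gamma>: "\<gamma> > 0"
  obtains \<alpha> \<beta> y1 where "y1 \<in> X" "(\<alpha> + \<beta>) * (e \<bullet> (y1 - x0)) < 0"
    "\<exists>\<epsilon>>0. \<forall>y\<in>X. dist y y1 < \<epsilon> \<longrightarrow>
       w y - tilted_quadratic x0 e \<gamma> \<alpha> \<beta> y \<le> w y1 - tilted_quadratic x0 e \<gamma> \<alpha> \<beta> y1"
proof -
  obtain r where r: "r > 0" "cball x0 r \<subseteq> X" using X open_contains_cball by blast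
  obtain xm where "xm \<in> cball x0 r" "\<forall>y\<in>cball x0 r. w y \<le> w xm"
    using usc_on_attains_max[OF compact_cball _ usc_on_subset[OF w(1) r(2)]] r(1) by force
  then obtain \<alpha> \<beta> y0 where \<alpha>\<beta>: "0 < \<alpha> + \<beta>" and y0: "y0 \<in> cball x0 r \<inter> {y. e \<bullet> (y - x0) \<le> 0}"
    and boundary: "\<And>y. y \<in> cball x0 r \<inter> {y. e \<bullet> (y - x0) \<le> 0} \<Longrightarrow> dist x0 y = r \<or> e \<bullet> (y - x0) = 0 \<Longrightarrow>
       w y - tilted_quadratic x0 e \<gamma> \<alpha> \<beta> y < w y0 - tilted_quadratic x0 e \<gamma> \<alpha> \<beta> y0"
    using halfball_penalty_separates[OF r w _ e \<gamma>] by blast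
  have usc: "usc_on (cball x0 r \<inter> {y. e \<bullet> (y - x0) \<le> 0}) (\<lambda>y. w y - tilted_quadratic x0 e \<gamma> \<alpha> \<beta> y)"
    unfolding tilted_quadratic_def
    by (intro usc_on_diff_continuous_on usc_on_subset[OF w(1)] continuous_intros) (use r(2) in auto)
  obtain y1 where "y1 \<in> X" "e \<bullet> (y1 - x0) < 0"
    "\<exists>\<epsilon>>0. \<forall>y\<in>X. dist y y1 < \<epsilon> \<longrightarrow>
       w y - tilted_quadratic x0 e \<gamma> \<alpha> \<beta> y \<le> w y1 - tilted_quadratic x0 e \<gamma> \<alpha> \<beta> y1"
    using halfball_local_max[OF r(2) e usc y0 boundary] by blast
  moreover have "(\<alpha> + \<beta>) * (e \<bullet> (y1 - x0)) < 0" using \<alpha>\<beta> calculation(2) by (simp add: mult_pos_neg)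
  ultimately show thesis using that by blast
qed

lemma vector_choose_direction:
  fixes a :: "'a::euclidean_space"
  obtains e where "norm e = 1" "a = norm a *\<^sub>R e"
proof (cases "a = 0")
  case True
  obtain e :: 'a where "norm e = 1" using vector_choose_size[of 1] by auto
  with True show ?thesis using that by simp
qed (use that[of "sgn a"] in \<open>simp add: norm_sgn sgn_div_norm\<close>)

lemma subgradient_touched_by_C2:
  fixes u :: "real^'n \<Rightarrow> real"
  assumes "open X" "x0 \<in> X" "usc_on X u" "\<And>y. y \<in> X \<Longrightarrow> u x0 + p \<bullet> (y - x0) \<le> u y"
    and "\<gamma> > 0"
  obtains \<phi> D\<phi> A y1 where "C2_with \<phi> D\<phi> (\<lambda>_. A)" "symmetric_mat A" "y1 \<in> X"
    "\<exists>\<epsilon>>0. \<forall>y\<in>X. dist y y1 < \<epsilon> \<longrightarrow> u y - \<phi> y \<le> u y1 - \<phi> y1"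
    "a \<bullet> D\<phi> y1 \<le> a \<bullet> p + \<gamma>"
proof -
  obtain e where e: "norm e = 1" "a = norm a *\<^sub>R e" by (rule vector_choose_direction)
  define \<delta> where "\<delta> = \<gamma> / (norm a + 1)"
  have "norm a + 1 > 0" by (simp add: add_nonneg_pos)
  then have \<delta>: "\<delta> > 0" "norm a * \<delta> \<le> \<gamma>"
    using assms(5) by (auto simp: \<delta>_def field_simps)
  define w where "w = (\<lambda>y. u y - (u x0 + p \<bullet> (y - x0)))"
  have "usc_on X w" unfolding w_def by (intro usc_on_diff_continuous_on assms(3) continuous_intros)
  moreover have "\<And>y. y \<in> X \<Longrightarrow> 0 \<le> w y" "w x0 = 0" using assms(4) by (auto simp: w_def)
  ultimately obtain \<alpha> \<beta> y1 where y1: "y1 \<in> X" "(\<alpha> + \<beta>) * (e \<bullet> (y1 - x0)) < 0"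
    and max: "\<exists>\<epsilon>>0. \<forall>y\<in>X. dist y y1 < \<epsilon> \<longrightarrow>
       w y - tilted_quadratic x0 e \<delta> \<alpha> \<beta> y \<le> w y1 - tilted_quadratic x0 e \<delta> \<alpha> \<beta> y1"
    using nonneg_usc_touched_from_above[OF assms(1,2) _ _ _ e(1) \<delta>(1)] by metis
  let ?\<phi> = "\<lambda>y. u x0 + (p + \<delta> *\<^sub>R e) \<bullet> (y - x0) + \<alpha> * (e \<bullet> (y - x0))\<^sup>2 + \<beta> * ((y - x0) \<bullet> (y - x0))"
  let ?D\<phi> = "\<lambda>y. (p + \<delta> *\<^sub>R e) + (2 * \<alpha> * (e \<bullet> (y - x0))) *\<^sub>R e + (2 * \<beta>) *\<^sub>R (y - x0)"
  show thesis
  proof (rule that[OF C2_with_quadratic y1(1)])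
    show "\<exists>\<epsilon>>0. \<forall>y\<in>X. dist y y1 < \<epsilon> \<longrightarrow> u y - ?\<phi> y \<le> u y1 - ?\<phi> y1"
      using max by (simp add: w_def tilted_quadratic_def inner_add_left algebra_simps)
    have "e \<bullet> e = 1" using e(1) by (simp add: norm_eq_1)
    then have "e \<bullet> ?D\<phi> y1 \<le> e \<bullet> p + \<delta>"
      using y1(2) by (simp add: inner_add_right inner_diff_right algebra_simps)
    then have "norm a * (e \<bullet> ?D\<phi> y1) \<le> norm a * (e \<bullet> p) + norm a * \<delta>"
      by (metis distrib_left mult_left_mono norm_ge_zero)
    then show "a \<bullet> ?D\<phi> y1 \<le> a \<bullet> p + \<gamma>"
      using \<delta>(2) by (subst (1 2) e(2)) simp
  qed
qed

theorem mainTheorem3: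
  fixes X Y :: "(real^'n) set" and f g H u :: "real^'n \<Rightarrow> real"
  assumes H1: "convex X" "bounded X" "open X" "convex Y" "bounded Y" "open Y"
    and H2: "f absolutely_integrable_on X" "\<forall>x\<in>X. f x \<ge> 0" "lsc_on X f"
    and H3: "g absolutely_integrable_on UNIV" "\<forall>y\<in>Y. g y > 0" "\<forall>y. y \<notin> Y \<longrightarrow> g y = 0"
            "usc_on UNIV g"
    and H4: "integral X f = integral Y g"
    and HH: "defining_function Y H"
    and sub: "viscosity_subsolution X f g H u"
  shows "subdiff_set X u X \<subseteq> closure Y"
proof
  fix p assume "p \<in> subdiff_set X u X"
  then obtain x0 where x0: "x0 \<in> X" "\<And>y. y \<in> X \<Longrightarrow> u x0 + p \<bullet> (y - x0) \<le> u y"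
    unfolding subdiff_set_def subdiff_def by blast
  show "p \<in> closure Y"
  proof (rule ccontr)
    assume "p \<notin> closure Y"
    then obtain a b where ab: "a \<bullet> p < b" "\<And>q. q \<in> closure Y \<Longrightarrow> b < a \<bullet> q"
      using separating_hyperplane_closed_point[OF convex_closure[OF H1(4)] closed_closure] by blast
    have usc: "usc_on X u" using sub unfolding viscosity_subsolution_def by blast
    obtain \<phi> D\<phi> A y1 where "C2_with \<phi> D\<phi> (\<lambda>_. A)" "symmetric_mat A" "y1 \<in> X"
      "\<exists>\<epsilon>>0. \<forall>y\<in>X. dist y y1 < \<epsilon> \<longrightarrow> u y - \<phi> y \<le> u y1 - \<phi> y1"
      and D\<phi>: "a \<bullet> D\<phi> y1 \<le> a \<bullet> p + (b - a \<bullet> p)"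
      using subgradient_touched_by_C2[OF H1(3) x0(1) usc x0(2)] ab(1) by (metis diff_gt_0_iff_gt)
    then have "opF_lower X f g H y1 (D\<phi> y1) A \<le> 0"
      using sub unfolding viscosity_subsolution_def by fastforce
    then have "H (D\<phi> y1) \<le> 0"
      using opF_lower_nonpos_imp_defining_function_nonpos HH H1(5) \<open>y1 \<in> X\<close> \<open>symmetric_mat A\<close> by blast
    then have "D\<phi> y1 \<in> closure Y" using HH unfolding defining_function_def by force
    then show False using ab(2) D\<phi> by fastforce
  qed
qed

end
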